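(* Let $\tilde F(\cdot)=\int S(t,\cdot)Y(dt)$ be a linear estimator of $F$, with bias $B_S(x)=\int S(t,x)F(t)dt-F(x)$ and stochastic part $\varepsilon Z_S(x)$, $Z_S(x)=\int S(t,x)W(dt)$, so that $\tilde F-F=B_S+\varepsilon Z_S$. Then for any $F\in\mathbb L_p(\mathcal D)\cap\mathbb L_2(\mathcal D)$ and $p\in[1,\infty]$, $$\frac14\{\|B_S\|_p+\varepsilon\mathbb E\|Z_S\|_p\}\le\mathcal R_p[\tilde F;F]\le\|B_S\|_p+\varepsilon\mathbb E\|Z_S\|_p.$$
   Context: $d\ge1$, $\varepsilon\in(0,1)$, $\mathcal D\subset\mathbb R^d$ an open box containing $\mathcal D_0=[-1/2,1/2]^d$. One observes $Y(dt)=F(t)dt+\varepsilon W(dt)$, $t\in\mathcal D$, $W$ a standard Brownian sheet; $\mathbb E_F$ expectation under the model, $\mathbb E$ expectation w.r.t. Wiener measure. $S:\mathcal D\times\mathcal D_0\to\mathbb R$ is a kernel. $\|\cdot\|_p$ is the $\mathbb L_p$-norm (over $\mathcal D_0$ for functions of $x$), and $\mathcal R_p[\tilde F;F]=\mathbb E_F\|\tilde F-F\|_p$. *)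

theory Defs
  imports "HOL-Probability.Probability"
begin

definition cube0 :: "(real ^ 'd) set" where
  "cube0 = cbox (- ((1/2) *\<^sub>R One)) ((1/2) *\<^sub>R One)"

definition Lp_norm :: "ennreal \<Rightarrow> ('a::euclidean_space) set \<Rightarrow> ('a \<Rightarrow> real) \<Rightarrow> ennreal" where
  "Lp_norm p A f =
     (if p = \<infinity> then esssup (lebesgue_on A) (\<lambda>x. ennreal \<bar>f x\<bar>)
      else (let N = (\<integral>\<^sup>+ x. ennreal (\<bar>f x\<bar> powr enn2real p) \<partial>lebesgue_on A)
            in if N = \<infinity> then \<infinity> else ennreal (enn2real N powr (1 / enn2real p))))"

definition L2_on :: "('a::euclidean_space) set \<Rightarrow> ('a \<Rightarrow> real) \<Rightarrow> bool" where
  "L2_on D f \<longleftrightarrow> f \<in> borel_measurable (lebesgue_on D) \<and> integrable (lebesgue_on D) (\<lambda>t. (f t)\<^sup>2)"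

text \<open>Wiener integral w.r.t. a standard Brownian sheet (white noise) on D, i.e. an isonormal
  Gaussian process indexed by L_2(D): g \<mapsto> \<integral> g(t) W(dt) is linear (a.s.) and
  N(0, integral of g squared) distributed (degenerate at 0 if that is 0).\<close>
definition wiener_integral_on :: "'w measure \<Rightarrow> ('a::euclidean_space) set \<Rightarrow> (('a \<Rightarrow> real) \<Rightarrow> 'w \<Rightarrow> real) \<Rightarrow> bool" where
  "wiener_integral_on M D I \<longleftrightarrow>
     (\<forall>g. L2_on D g \<longrightarrow>
        (let v = (\<integral>t. (g t)\<^sup>2 \<partial>lebesgue_on D) in
          I g \<in> borel_measurable M \<and>
          (if v = 0 then (AE \<omega> in M. I g \<omega> = 0)
           else distributed M lborel (I g) (normal_density 0 (sqrt v))))) \<and>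
     (\<forall>g h a b. L2_on D g \<longrightarrow> L2_on D h \<longrightarrow>
        (AE \<omega> in M. I (\<lambda>t. a * g t + b * h t) \<omega> = a * I g \<omega> + b * I h \<omega>))"

end

theory Submission
  imports Defs
begin

text \<open>The error of the estimator is Y = B + \<epsilon> Z, and since Wiener integrals are centred,
  B is the mean of Y. Minkowski's inequality gives the upper bound. Minkowski's integral
  inequality \<parallel>E Y\<parallel>_p \<le> E \<parallel>Y\<parallel>_p gives \<parallel>B\<parallel>_p \<le> R for the risk R, hence
  \<epsilon> E \<parallel>Z\<parallel>_p \<le> R + \<parallel>B\<parallel>_p \<le> 2 R, and the sum of both terms is at most 3 R.
  For finite p, Minkowski's integral inequality follows from Jensen's inequality for
  x \<mapsto> x^p after changing measure to the density proportional to \<parallel>Y(\<cdot>, \<omega>)\<parallel>_p + \<delta>.\<close>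

lemma powr_ge_tangent:
  fixes c t q :: real
  assumes "0 \<le> c" "0 \<le> t" "1 \<le> q"
  shows "c powr q + q * c powr (q - 1) * (t - c) \<le> t powr q"
proof (cases "c = 0 \<or> t = 0")
  case True
  have "c powr (q - 1) * c = c powr q"
    using assms by (cases "c = 0") (auto simp: powr_diff)
  moreover have "c powr q \<le> q * c powr q"
    using assms by (simp add: mult_le_cancel_right1)
  ultimately show ?thesis
    using True assms by (auto simp: algebra_simps)
next
  case False
  then have "0 < c" "0 < t" using assms by auto
  have "((\<lambda>x. x powr q) has_field_derivative q * c powr (q - 1)) (at c within {0<..})"
    using \<open>0 < c\<close> by (auto intro!: derivative_eq_intros)
  from convex_on_imp_above_tangent[OF powr_convex[OF \<open>1 \<le> q\<close>] _ _ _ this]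
  show ?thesis using \<open>0 < c\<close> \<open>0 < t\<close> by (force simp: interior_open)
qed

lemma powr_perspective_ge_tangent:
  fixes c v w q :: real
  assumes "0 \<le> c" "0 \<le> v" "0 < w" "1 \<le> q"
  shows "w * c powr q + q * c powr (q - 1) * (v - c * w) \<le> v powr q / w powr (q - 1)"
proof -
  have "w * (c powr q + q * c powr (q - 1) * (v / w - c)) \<le> w * (v / w) powr q"
    using powr_ge_tangent[of c "v / w" q] assms by (intro mult_left_mono) auto
  moreover have "w * (c powr q + q * c powr (q - 1) * (v / w - c))
      = w * c powr q + q * c powr (q - 1) * (v - c * w)"
    using assms by (simp add: field_simps)
  moreover have "w * (v / w) powr q = v powr q / w powr (q - 1)"
    using assms by (simp add: powr_divide powr_diff field_simps)
  ultimately show ?thesis by simp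
qed

lemma add_powr_div_le:
  fixes x y a b q :: real
  assumes "0 \<le> x" "0 \<le> y" "0 < a" "0 < b" "1 \<le> q"
  shows "(x + y) powr q / (a + b) powr (q - 1) \<le> x powr q / a powr (q - 1) + y powr q / b powr (q - 1)"
proof -
  define c where "c = (x + y) / (a + b)"
  have "0 \<le> c" unfolding c_def using assms by simp
  have "(a + b) * c powr q + q * c powr (q - 1) * (x + y - c * (a + b))
      \<le> x powr q / a powr (q - 1) + y powr q / b powr (q - 1)"
    using powr_perspective_ge_tangent[OF \<open>0 \<le> c\<close> \<open>0 \<le> x\<close> \<open>0 < a\<close> \<open>1 \<le> q\<close>]
      powr_perspective_ge_tangent[OF \<open>0 \<le> c\<close> \<open>0 \<le> y\<close> \<open>0 < b\<close> \<open>1 \<le> q\<close>]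
    by (simp add: algebra_simps)
  moreover have "x + y - c * (a + b) = 0" unfolding c_def using assms by simp
  moreover have "(a + b) * c powr q = (x + y) powr q / (a + b) powr (q - 1)"
    unfolding c_def using assms by (simp add: powr_divide powr_diff field_simps)
  ultimately show ?thesis by simp
qed

lemma powr_div_powr_le:
  fixes h d q :: real
  assumes "0 \<le> h" "0 < d" "1 \<le> q"
  shows "h powr q / (h + d) powr (q - 1) \<le> h + d"
proof -
  have "h powr q \<le> (h + d) powr q" using assms by (intro powr_mono2) auto
  also have "\<dots> = (h + d) * (h + d) powr (q - 1)" using assms by (simp add: powr_diff)
  finally show ?thesis using assms by (simp add: divide_le_eq)
qed

lemma (in prob_space) integral_powr_le_weighted:
  fixes v w :: "'a \<Rightarrow> real" and q :: real
  assumes w: "w \<in> borel_measurable M" "integrable M w" "(\<integral>\<omega>. w \<omega> \<partial>M) = 1"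
    and w_pos: "\<And>\<omega>. \<omega> \<in> space M \<Longrightarrow> 0 < w \<omega>"
    and v: "v \<in> borel_measurable M" "integrable M v"
    and v_nonneg: "\<And>\<omega>. \<omega> \<in> space M \<Longrightarrow> 0 \<le> v \<omega>"
    and q: "1 \<le> q"
  shows "ennreal ((\<integral>\<omega>. v \<omega> \<partial>M) powr q) \<le> (\<integral>\<^sup>+\<omega>. ennreal (v \<omega> powr q / w \<omega> powr (q - 1)) \<partial>M)"
proof (cases "(\<integral>\<^sup>+\<omega>. ennreal (v \<omega> powr q / w \<omega> powr (q - 1)) \<partial>M) = \<infinity>")
  case False
  define c where "c = (\<integral>\<omega>. v \<omega> \<partial>M)"
  have "0 \<le> c" unfolding c_def using v_nonneg by (simp add: integral_nonneg_AE)
  have r_int: "integrable M (\<lambda>\<omega>. v \<omega> powr q / w \<omega> powr (q - 1))"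
    using False v(1) w(1) by (intro integrableI_nonneg) (auto simp: top.not_eq_extremum)
  \<comment> \<open>integrate the tangent of the perspective (v, w) \<mapsto> v^q / w^(q-1) at (c, 1)\<close>
  have "c powr q = (\<integral>\<omega>. w \<omega> * c powr q + q * c powr (q - 1) * (v \<omega> - c * w \<omega>) \<partial>M)"
    using w v by (simp add: c_def algebra_simps)
  also have "\<dots> \<le> (\<integral>\<omega>. v \<omega> powr q / w \<omega> powr (q - 1) \<partial>M)"
    using w v r_int w_pos v_nonneg \<open>0 \<le> c\<close> q
    by (intro integral_mono powr_perspective_ge_tangent) auto
  finally have "ennreal (c powr q) \<le> ennreal (\<integral>\<omega>. v \<omega> powr q / w \<omega> powr (q - 1) \<partial>M)"
    by (rule ennreal_leI)
  also have "\<dots> = (\<integral>\<^sup>+\<omega>. ennreal (v \<omega> powr q / w \<omega> powr (q - 1)) \<partial>M)"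
    using r_int by (subst nn_integral_eq_integral) auto
  finally show ?thesis unfolding c_def .
qed simp

lemma enn2real_ge_1: "1 \<le> p \<Longrightarrow> p \<noteq> \<infinity> \<Longrightarrow> 1 \<le> enn2real (p :: ennreal)"
  using enn2real_mono[of 1 p] by (simp add: top.not_eq_extremum)

lemma esssup_cmult_le:
  fixes f :: "'a \<Rightarrow> ennreal"
  assumes "f \<in> borel_measurable N"
  shows "esssup N (\<lambda>x. c * f x) \<le> c * esssup N f"
proof (rule esssup_I)
  show "AE x in N. c * f x \<le> c * esssup N f"
    using esssup_AE[of f N] by eventually_elim (rule mult_left_mono, auto)
qed (use assms in measurable)

lemma esssup_cmult:
  fixes f :: "'a \<Rightarrow> ennreal"
  assumes "f \<in> borel_measurable N" "c \<noteq> 0" "c \<noteq> \<infinity>"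
  shows "esssup N (\<lambda>x. c * f x) = c * esssup N f"
proof (rule antisym)
  have inv: "inverse c * c = 1"
    using assms ennreal_divide_self[of c] by (simp add: divide_ennreal_def mult.commute top.not_eq_extremum)
  have "esssup N f = esssup N (\<lambda>x. inverse c * (c * f x))"
    by (simp add: inv flip: mult.assoc)
  also have "\<dots> \<le> inverse c * esssup N (\<lambda>x. c * f x)"
    using assms(1) by (intro esssup_cmult_le) measurable
  finally have "c * esssup N f \<le> c * (inverse c * esssup N (\<lambda>x. c * f x))"
    by (rule mult_left_mono) simp
  also have "\<dots> = esssup N (\<lambda>x. c * f x)"
    by (simp add: inv mult.commute[of c] flip: mult.assoc)
  finally show "c * esssup N f \<le> esssup N (\<lambda>x. c * f x)" .
qed (rule esssup_cmult_le[OF assms(1)])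

lemma esssup_add_le:
  fixes f g :: "'a \<Rightarrow> ennreal"
  assumes "f \<in> borel_measurable N" "g \<in> borel_measurable N"
  shows "esssup N (\<lambda>x. f x + g x) \<le> esssup N f + esssup N g"
proof (rule esssup_I)
  show "AE x in N. f x + g x \<le> esssup N f + esssup N g"
    using esssup_AE[of f N] esssup_AE[of g N] by eventually_elim (rule add_mono)
qed (use assms in measurable)

lemma borel_measurable_esssup:
  fixes G :: "'a \<Rightarrow> 'b \<Rightarrow> ennreal"
  assumes N: "sigma_finite_measure N"
    and G[measurable]: "(\<lambda>(x, \<omega>). G x \<omega>) \<in> borel_measurable (N \<Otimes>\<^sub>M M)"
  shows "(\<lambda>\<omega>. esssup N (\<lambda>x. G x \<omega>)) \<in> borel_measurable M"
proof (rule borel_measurableI_less)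
  interpret N: sigma_finite_measure N by fact
  fix y :: ennreal
  have G_swap[measurable]: "(\<lambda>(\<omega>, x). G x \<omega>) \<in> borel_measurable (M \<Otimes>\<^sub>M N)"
    using measurable_pair_swap[OF G] by simp
  have G_section: "(\<lambda>x. G x \<omega>) \<in> borel_measurable N" if "\<omega> \<in> space M" for \<omega>
    using measurable_Pair1[OF G that] by simp
  define S where "S r = {\<omega>\<in>space M. ennreal (real_of_rat r) < y \<and>
      emeasure N {x\<in>space N. ennreal (real_of_rat r) < G x \<omega>} = 0}" for r
  \<comment> \<open>esssup below y iff some rational between them bounds G x \<omega> almost everywhere\<close>
  have "{\<omega>\<in>space M. esssup N (\<lambda>x. G x \<omega>) < y} = (\<Union>r. S r)"
  proof (intro set_eqI iffI)
    fix \<omega> assume "\<omega> \<in> {\<omega>\<in>space M. esssup N (\<lambda>x. G x \<omega>) < y}"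
    then have \<omega>: "\<omega> \<in> space M" and "esssup N (\<lambda>x. G x \<omega>) < y" by auto
    then obtain r :: rat where r: "esssup N (\<lambda>x. G x \<omega>) < ennreal (real_of_rat r)"
      "ennreal (real_of_rat r) < y"
      using ennreal_rat_dense by blast
    have "AE x in N. \<not> ennreal (real_of_rat r) < G x \<omega>"
      using esssup_AE[of "\<lambda>x. G x \<omega>" N] by eventually_elim (use r in auto)
    then have "emeasure N {x\<in>space N. ennreal (real_of_rat r) < G x \<omega>} = 0"
      using G_section[OF \<omega>] by (subst (asm) AE_iff_measurable[OF _ refl]) auto
    then show "\<omega> \<in> (\<Union>r. S r)" using \<omega> r unfolding S_def by blast
  next
    fix \<omega> assume "\<omega> \<in> (\<Union>r. S r)"
    then obtain r where \<omega>: "\<omega> \<in> space M" and r: "ennreal (real_of_rat r) < y"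
      and null: "emeasure N {x\<in>space N. ennreal (real_of_rat r) < G x \<omega>} = 0"
      unfolding S_def by blast
    have "AE x in N. \<not> ennreal (real_of_rat r) < G x \<omega>"
      using G_section[OF \<omega>] null by (subst AE_iff_measurable[OF _ refl]) auto
    then have "esssup N (\<lambda>x. G x \<omega>) \<le> ennreal (real_of_rat r)"
      using G_section[OF \<omega>] by (intro esssup_I) (auto elim!: eventually_mono simp: not_less)
    then show "\<omega> \<in> {\<omega>\<in>space M. esssup N (\<lambda>x. G x \<omega>) < y}"
      using \<omega> r by auto
  qed
  moreover have "S r \<in> sets M" for r
    unfolding S_def by measurable
  ultimately show "{\<omega>\<in>space M. esssup N (\<lambda>x. G x \<omega>) < y} \<in> sets M"
    by (simp add: sets.countable_UN)
qed

definition measure_Lp_norm :: "ennreal \<Rightarrow> 'a measure \<Rightarrow> ('a \<Rightarrow> real) \<Rightarrow> ennreal" where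
  "measure_Lp_norm p N f =
     (if p = \<infinity> then esssup N (\<lambda>x. ennreal \<bar>f x\<bar>)
      else (let I = (\<integral>\<^sup>+ x. ennreal (\<bar>f x\<bar> powr enn2real p) \<partial>N)
            in if I = \<infinity> then \<infinity> else ennreal (enn2real I powr (1 / enn2real p))))"

lemma Lp_norm_eq_measure_Lp_norm: "Lp_norm p A f = measure_Lp_norm p (lebesgue_on A) f"
  unfolding Lp_norm_def measure_Lp_norm_def by simp

lemma measure_Lp_norm_infinite_exponent:
  "p = \<infinity> \<Longrightarrow> measure_Lp_norm p N f = esssup N (\<lambda>x. ennreal \<bar>f x\<bar>)"
  by (simp add: measure_Lp_norm_def)

lemma measure_Lp_norm_finite_exponent:
  assumes "p \<noteq> \<infinity>"
  shows "measure_Lp_norm p N f =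
    (if (\<integral>\<^sup>+ x. ennreal (\<bar>f x\<bar> powr enn2real p) \<partial>N) = \<infinity> then \<infinity>
     else ennreal (enn2real (\<integral>\<^sup>+ x. ennreal (\<bar>f x\<bar> powr enn2real p) \<partial>N) powr (1 / enn2real p)))"
  using assms by (simp add: measure_Lp_norm_def Let_def)

lemma measure_Lp_norm_leI:
  assumes "p \<noteq> \<infinity>" "0 < enn2real p" "0 \<le> r"
    and "(\<integral>\<^sup>+ x. ennreal (\<bar>f x\<bar> powr enn2real p) \<partial>N) \<le> ennreal (r powr enn2real p)"
  shows "measure_Lp_norm p N f \<le> ennreal r"
proof -
  let ?I = "\<integral>\<^sup>+ x. ennreal (\<bar>f x\<bar> powr enn2real p) \<partial>N"
  have "?I \<noteq> \<infinity>" using assms(4) by (auto simp: top_unique)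
  have "enn2real ?I powr (1 / enn2real p) \<le> (r powr enn2real p) powr (1 / enn2real p)"
    using assms by (intro powr_mono2 enn2real_leI) auto
  also have "\<dots> = r" using assms by (simp add: powr_powr)
  finally show ?thesis
    using \<open>?I \<noteq> \<infinity>\<close> assms(1) by (simp add: measure_Lp_norm_finite_exponent ennreal_leI)
qed

lemma nn_integral_powr_eq_measure_Lp_norm:
  assumes "p \<noteq> \<infinity>" "1 \<le> p" "measure_Lp_norm p N f \<noteq> \<infinity>"
  shows "(\<integral>\<^sup>+ x. ennreal (\<bar>f x\<bar> powr enn2real p) \<partial>N)
       = ennreal (enn2real (measure_Lp_norm p N f) powr enn2real p)"
proof -
  let ?I = "\<integral>\<^sup>+ x. ennreal (\<bar>f x\<bar> powr enn2real p) \<partial>N"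
  have "?I \<noteq> \<infinity>" using assms by (auto simp: measure_Lp_norm_finite_exponent)
  moreover have "1 \<le> enn2real p" using assms by (simp add: enn2real_ge_1)
  ultimately have "enn2real (measure_Lp_norm p N f) powr enn2real p = enn2real ?I"
    using assms(1) by (simp add: measure_Lp_norm_finite_exponent powr_powr)
  with \<open>?I \<noteq> \<infinity>\<close> show ?thesis by (simp add: top.not_eq_extremum)
qed

lemma measure_Lp_norm_add_le:
  fixes f g :: "'a \<Rightarrow> real"
  assumes [measurable]: "f \<in> borel_measurable N" "g \<in> borel_measurable N" and p: "1 \<le> p"
  shows "measure_Lp_norm p N (\<lambda>x. f x + g x) \<le> measure_Lp_norm p N f + measure_Lp_norm p N g"
proof (cases "p = \<infinity>")
  case True
  have "esssup N (\<lambda>x. ennreal \<bar>f x + g x\<bar>) \<le> esssup N (\<lambda>x. ennreal \<bar>f x\<bar> + ennreal \<bar>g x\<bar>)"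
    by (intro esssup_mono) (auto simp flip: ennreal_plus intro: ennreal_leI)
  also have "\<dots> \<le> esssup N (\<lambda>x. ennreal \<bar>f x\<bar>) + esssup N (\<lambda>x. ennreal \<bar>g x\<bar>)"
    by (rule esssup_add_le) measurable
  finally show ?thesis using True by (simp add: measure_Lp_norm_infinite_exponent)
next
  case False
  define q where "q = enn2real p"
  have q: "1 \<le> q" unfolding q_def using p False by (rule enn2real_ge_1)
  show ?thesis
  proof (cases "measure_Lp_norm p N f = \<infinity> \<or> measure_Lp_norm p N g = \<infinity>")
    case finite: False
    define a where "a = enn2real (measure_Lp_norm p N f)"
    define b where "b = enn2real (measure_Lp_norm p N g)"
    have "0 \<le> a" "0 \<le> b" unfolding a_def b_def by auto
    have int_f: "(\<integral>\<^sup>+ x. ennreal (\<bar>f x\<bar> powr q) \<partial>N) = ennreal (a powr q)"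
      using False p finite unfolding a_def q_def by (intro nn_integral_powr_eq_measure_Lp_norm) auto
    have int_g: "(\<integral>\<^sup>+ x. ennreal (\<bar>g x\<bar> powr q) \<partial>N) = ennreal (b powr q)"
      using False p finite unfolding b_def q_def by (intro nn_integral_powr_eq_measure_Lp_norm) auto
    \<comment> \<open>a and b are perturbed to become positive weights for the convexity inequality\<close>
    have bound: "measure_Lp_norm p N (\<lambda>x. f x + g x) \<le> ennreal (a + b + 2 * \<delta>)" if "0 < \<delta>" for \<delta>
    proof -
      define K where "K = (a + b + 2 * \<delta>) powr (q - 1)"
      define Kf where "Kf = K / (a + \<delta>) powr (q - 1)"
      define Kg where "Kg = K / (b + \<delta>) powr (q - 1)"
      have "0 \<le> Kf" "0 \<le> Kg" unfolding Kf_def Kg_def K_def by auto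
      have "(\<integral>\<^sup>+ x. ennreal (\<bar>f x + g x\<bar> powr q) \<partial>N)
          \<le> (\<integral>\<^sup>+ x. ennreal Kf * ennreal (\<bar>f x\<bar> powr q) + ennreal Kg * ennreal (\<bar>g x\<bar> powr q) \<partial>N)"
      proof (intro nn_integral_mono)
        fix x
        have "\<bar>f x + g x\<bar> powr q \<le> (\<bar>f x\<bar> + \<bar>g x\<bar>) powr q"
          using q by (intro powr_mono2) auto
        also have "\<dots> \<le> K * (\<bar>f x\<bar> powr q / (a + \<delta>) powr (q - 1) + \<bar>g x\<bar> powr q / (b + \<delta>) powr (q - 1))"
          using add_powr_div_le[of "\<bar>f x\<bar>" "\<bar>g x\<bar>" "a + \<delta>" "b + \<delta>" q] \<open>0 \<le> a\<close> \<open>0 \<le> b\<close> \<open>0 < \<delta>\<close> q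
          by (simp add: K_def divide_le_eq mult.commute add_ac)
        also have "\<dots> = Kf * \<bar>f x\<bar> powr q + Kg * \<bar>g x\<bar> powr q"
          by (simp add: Kf_def Kg_def algebra_simps)
        finally show "ennreal (\<bar>f x + g x\<bar> powr q)
            \<le> ennreal Kf * ennreal (\<bar>f x\<bar> powr q) + ennreal Kg * ennreal (\<bar>g x\<bar> powr q)"
          using \<open>0 \<le> Kf\<close> \<open>0 \<le> Kg\<close> by (simp add: ennreal_leI flip: ennreal_mult ennreal_plus)
      qed
      also have "\<dots> = ennreal (Kf * a powr q + Kg * b powr q)"
        using \<open>0 \<le> Kf\<close> \<open>0 \<le> Kg\<close>
        by (subst nn_integral_add) (auto simp: nn_integral_cmult int_f int_g ennreal_mult ennreal_plus)
      also have "\<dots> \<le> ennreal (K * ((a + \<delta>) + (b + \<delta>)))"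
      proof (intro ennreal_leI)
        have "Kf * a powr q + Kg * b powr q
            = K * (a powr q / (a + \<delta>) powr (q - 1) + b powr q / (b + \<delta>) powr (q - 1))"
          by (simp add: Kf_def Kg_def algebra_simps)
        also have "\<dots> \<le> K * ((a + \<delta>) + (b + \<delta>))"
          using \<open>0 \<le> a\<close> \<open>0 \<le> b\<close> \<open>0 < \<delta>\<close> q unfolding K_def
          by (intro mult_left_mono add_mono powr_div_powr_le) auto
        finally show "Kf * a powr q + Kg * b powr q \<le> K * ((a + \<delta>) + (b + \<delta>))" .
      qed
      also have "K * ((a + \<delta>) + (b + \<delta>)) = (a + b + 2 * \<delta>) powr q"
        using \<open>0 \<le> a\<close> \<open>0 \<le> b\<close> \<open>0 < \<delta>\<close> by (simp add: K_def powr_diff add_ac)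
      finally show ?thesis
        using False q \<open>0 \<le> a\<close> \<open>0 \<le> b\<close> \<open>0 < \<delta>\<close>
        by (intro measure_Lp_norm_leI) (auto simp: q_def)
    qed
    have "measure_Lp_norm p N (\<lambda>x. f x + g x) \<le> ennreal (a + b)"
    proof (rule ennreal_le_epsilon)
      fix e :: real assume "0 < e"
      then show "measure_Lp_norm p N (\<lambda>x. f x + g x) \<le> ennreal (a + b) + ennreal e"
        using bound[of "e / 2"] \<open>0 \<le> a\<close> \<open>0 \<le> b\<close> by (simp flip: ennreal_plus)
    qed
    then show ?thesis
      using finite \<open>0 \<le> a\<close> \<open>0 \<le> b\<close> by (simp add: a_def b_def ennreal_plus top.not_eq_extremum)
  qed auto
qed

lemma measure_Lp_norm_uminus: "measure_Lp_norm p N (\<lambda>x. - f x) = measure_Lp_norm p N f"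
  by (simp add: measure_Lp_norm_def)

lemma measure_Lp_norm_cmult:
  fixes f :: "'a \<Rightarrow> real"
  assumes f[measurable]: "f \<in> borel_measurable N" and c: "0 < c" and p: "1 \<le> p"
  shows "measure_Lp_norm p N (\<lambda>x. c * f x) = ennreal c * measure_Lp_norm p N f"
proof (cases "p = \<infinity>")
  case True
  have "esssup N (\<lambda>x. ennreal \<bar>c * f x\<bar>) = esssup N (\<lambda>x. ennreal c * ennreal \<bar>f x\<bar>)"
    using c by (simp add: abs_mult ennreal_mult)
  also have "\<dots> = ennreal c * esssup N (\<lambda>x. ennreal \<bar>f x\<bar>)"
    using c by (intro esssup_cmult) auto
  finally show ?thesis using True by (simp add: measure_Lp_norm_infinite_exponent)
next
  case False
  define q where "q = enn2real p"
  have q: "1 \<le> q" unfolding q_def using p False by (rule enn2real_ge_1)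
  define I where "I = (\<integral>\<^sup>+ x. ennreal (\<bar>f x\<bar> powr q) \<partial>N)"
  have "(\<integral>\<^sup>+ x. ennreal (\<bar>c * f x\<bar> powr q) \<partial>N) = (\<integral>\<^sup>+ x. ennreal (c powr q) * ennreal (\<bar>f x\<bar> powr q) \<partial>N)"
    using c by (intro nn_integral_cong) (simp add: abs_mult powr_mult ennreal_mult)
  also have "\<dots> = ennreal (c powr q) * I"
    unfolding I_def by (rule nn_integral_cmult) measurable
  finally have int_cf: "(\<integral>\<^sup>+ x. ennreal (\<bar>c * f x\<bar> powr q) \<partial>N) = ennreal (c powr q) * I" .
  have "enn2real (ennreal (c powr q) * I) powr (1 / q) = c * enn2real I powr (1 / q)"
    using c q by (simp add: enn2real_mult powr_mult powr_powr)
  then show ?thesis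
    using False c int_cf
    by (simp add: measure_Lp_norm_finite_exponent flip: q_def I_def)
       (auto simp: ennreal_mult_eq_top_iff ennreal_mult)
qed

lemma borel_measurable_measure_Lp_norm:
  fixes G :: "'a \<Rightarrow> 'b \<Rightarrow> real"
  assumes N: "sigma_finite_measure N"
    and G[measurable]: "(\<lambda>(x, \<omega>). G x \<omega>) \<in> borel_measurable (N \<Otimes>\<^sub>M M)"
  shows "(\<lambda>\<omega>. measure_Lp_norm p N (\<lambda>x. G x \<omega>)) \<in> borel_measurable M"
proof (cases "p = \<infinity>")
  case True
  have "(\<lambda>(x, \<omega>). ennreal \<bar>G x \<omega>\<bar>) \<in> borel_measurable (N \<Otimes>\<^sub>M M)"
    by measurable
  from borel_measurable_esssup[OF N this] show ?thesis
    using True by (simp add: measure_Lp_norm_infinite_exponent)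
next
  case False
  interpret N: sigma_finite_measure N by fact
  have [measurable]: "(\<lambda>(\<omega>, x). G x \<omega>) \<in> borel_measurable (M \<Otimes>\<^sub>M N)"
    using measurable_pair_swap[OF G] by simp
  have "(\<lambda>\<omega>. \<integral>\<^sup>+ x. ennreal (\<bar>G x \<omega>\<bar> powr enn2real p) \<partial>N) \<in> borel_measurable M"
    by measurable
  then show ?thesis using False by (simp add: measure_Lp_norm_finite_exponent)
qed

lemma nn_integral_powr_mean_le:
  fixes Y :: "'a \<Rightarrow> 'b \<Rightarrow> real" and B h :: "_ \<Rightarrow> real" and q \<delta> :: real
  assumes M: "prob_space M" and N: "sigma_finite_measure N"
    and Y[measurable]: "(\<lambda>(x, \<omega>). Y x \<omega>) \<in> borel_measurable (N \<Otimes>\<^sub>M M)"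
    and Y_int: "\<And>x. x \<in> space N \<Longrightarrow> integrable M (Y x)"
    and B: "\<And>x. x \<in> space N \<Longrightarrow> B x = (\<integral>\<omega>. Y x \<omega> \<partial>M)"
    and h[measurable]: "h \<in> borel_measurable M" "integrable M h" "\<And>\<omega>. 0 \<le> h \<omega>"
    and h_norm: "AE \<omega> in M. (\<integral>\<^sup>+ x. ennreal (\<bar>Y x \<omega>\<bar> powr q) \<partial>N) = ennreal (h \<omega> powr q)"
    and q: "1 \<le> q" and \<delta>: "0 < \<delta>"
  shows "(\<integral>\<^sup>+ x. ennreal (\<bar>B x\<bar> powr q) \<partial>N) \<le> ennreal (((\<integral>\<omega>. h \<omega> \<partial>M) + \<delta>) powr q)"
proof -
  interpret M: prob_space M by fact
  interpret pair_sigma_finite N M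
    using N M.sigma_finite_measure_axioms by (simp add: pair_sigma_finite_def)
  define K where "K = (\<integral>\<omega>. h \<omega> \<partial>M) + \<delta>"
  have "0 < K" unfolding K_def using h \<delta> by (simp add: integral_nonneg_AE add_nonneg_pos)
  \<comment> \<open>weights proportional to the section norms h \<omega>, shifted by \<delta> to be positive\<close>
  define w where "w \<omega> = (h \<omega> + \<delta>) / K" for \<omega>
  have w_pos: "0 < w \<omega>" for \<omega> unfolding w_def using h(3)[of \<omega>] \<delta> \<open>0 < K\<close> by simp
  have w[measurable]: "w \<in> borel_measurable M" "integrable M w" "(\<integral>\<omega>. w \<omega> \<partial>M) = 1"
    unfolding w_def using h \<open>0 < K\<close> by (auto simp: K_def M.prob_space)
  have Y_section[measurable]: "Y x \<in> borel_measurable M" if "x \<in> space N" for x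
    using measurable_Pair2[OF Y that] by simp
  have "(\<integral>\<^sup>+ x. ennreal (\<bar>B x\<bar> powr q) \<partial>N)
      \<le> (\<integral>\<^sup>+ x. (\<integral>\<^sup>+ \<omega>. ennreal (\<bar>Y x \<omega>\<bar> powr q / w \<omega> powr (q - 1)) \<partial>M) \<partial>N)"
  proof (rule nn_integral_mono)
    fix x assume x: "x \<in> space N"
    have "\<bar>B x\<bar> powr q \<le> (\<integral>\<omega>. \<bar>Y x \<omega>\<bar> \<partial>M) powr q"
      using B[OF x] Y_int[OF x] q by (intro powr_mono2 integral_abs_bound) auto
    then have "ennreal (\<bar>B x\<bar> powr q) \<le> ennreal ((\<integral>\<omega>. \<bar>Y x \<omega>\<bar> \<partial>M) powr q)"
      by (rule ennreal_leI)
    also have "\<dots> \<le> (\<integral>\<^sup>+ \<omega>. ennreal (\<bar>Y x \<omega>\<bar> powr q / w \<omega> powr (q - 1)) \<partial>M)"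
      using w w_pos Y_int[OF x] Y_section[OF x] q by (intro M.integral_powr_le_weighted) auto
    finally show "ennreal (\<bar>B x\<bar> powr q)
        \<le> (\<integral>\<^sup>+ \<omega>. ennreal (\<bar>Y x \<omega>\<bar> powr q / w \<omega> powr (q - 1)) \<partial>M)" .
  qed
  also have "\<dots> = (\<integral>\<^sup>+ \<omega>. (\<integral>\<^sup>+ x. ennreal (\<bar>Y x \<omega>\<bar> powr q / w \<omega> powr (q - 1)) \<partial>N) \<partial>M)"
    by (rule Fubini'[symmetric]) measurable
  also have "\<dots> = (\<integral>\<^sup>+ \<omega>. ennreal (h \<omega> powr q / w \<omega> powr (q - 1)) \<partial>M)"
  proof (rule nn_integral_cong_AE)
    show "AE \<omega> in M. (\<integral>\<^sup>+ x. ennreal (\<bar>Y x \<omega>\<bar> powr q / w \<omega> powr (q - 1)) \<partial>N)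
        = ennreal (h \<omega> powr q / w \<omega> powr (q - 1))"
      using h_norm AE_space
    proof eventually_elim
      case (elim \<omega>)
      have [measurable]: "(\<lambda>x. Y x \<omega>) \<in> borel_measurable N"
        using measurable_Pair1[OF Y elim(2)] by simp
      have "(\<integral>\<^sup>+ x. ennreal (\<bar>Y x \<omega>\<bar> powr q / w \<omega> powr (q - 1)) \<partial>N)
          = ennreal (1 / w \<omega> powr (q - 1)) * (\<integral>\<^sup>+ x. ennreal (\<bar>Y x \<omega>\<bar> powr q) \<partial>N)"
        by (subst nn_integral_cmult[symmetric]) (auto simp flip: ennreal_mult)
      then show ?case using elim by (simp flip: ennreal_mult)
    qed
  qed
  also have "\<dots> \<le> (\<integral>\<^sup>+ \<omega>. ennreal (K powr (q - 1) * (h \<omega> + \<delta>)) \<partial>M)"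
  proof (intro nn_integral_mono ennreal_leI)
    fix \<omega>
    have "h \<omega> powr q / w \<omega> powr (q - 1) = K powr (q - 1) * (h \<omega> powr q / (h \<omega> + \<delta>) powr (q - 1))"
      using h(3)[of \<omega>] \<delta> \<open>0 < K\<close> by (simp add: w_def powr_divide)
    also have "\<dots> \<le> K powr (q - 1) * (h \<omega> + \<delta>)"
      using h(3)[of \<omega>] \<delta> q by (intro mult_left_mono powr_div_powr_le) auto
    finally show "h \<omega> powr q / w \<omega> powr (q - 1) \<le> K powr (q - 1) * (h \<omega> + \<delta>)" .
  qed
  also have "\<dots> = ennreal (K powr (q - 1) * K)"
    using h \<delta> by (subst nn_integral_eq_integral) (auto simp: K_def M.prob_space)
  also have "K powr (q - 1) * K = K powr q"
    using \<open>0 < K\<close> by (simp add: powr_diff)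
  finally show ?thesis unfolding K_def .
qed

lemma measure_Lp_norm_integral_le:
  fixes Y :: "'a \<Rightarrow> 'b \<Rightarrow> real" and B :: "'a \<Rightarrow> real"
  assumes M: "prob_space M" and N: "sigma_finite_measure N"
    and Y[measurable]: "(\<lambda>(x, \<omega>). Y x \<omega>) \<in> borel_measurable (N \<Otimes>\<^sub>M M)"
    and B[measurable]: "B \<in> borel_measurable N"
    and Y_int: "\<And>x. x \<in> space N \<Longrightarrow> integrable M (Y x)"
    and B_eq: "\<And>x. x \<in> space N \<Longrightarrow> B x = (\<integral>\<omega>. Y x \<omega> \<partial>M)"
    and p: "1 \<le> p"
  shows "measure_Lp_norm p N B \<le> (\<integral>\<^sup>+ \<omega>. measure_Lp_norm p N (\<lambda>x. Y x \<omega>) \<partial>M)"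
proof -
  interpret M: prob_space M by fact
  interpret P: pair_sigma_finite N M
    using N M.sigma_finite_measure_axioms by (simp add: pair_sigma_finite_def)
  define m where "m = (\<integral>\<^sup>+ \<omega>. measure_Lp_norm p N (\<lambda>x. Y x \<omega>) \<partial>M)"
  have [measurable]: "(\<lambda>\<omega>. measure_Lp_norm p N (\<lambda>x. Y x \<omega>)) \<in> borel_measurable M"
    by (rule borel_measurable_measure_Lp_norm[OF N Y])
  have B_le: "ennreal \<bar>B x\<bar> \<le> (\<integral>\<^sup>+ \<omega>. ennreal \<bar>Y x \<omega>\<bar> \<partial>M)" if x: "x \<in> space N" for x
  proof -
    have "ennreal \<bar>B x\<bar> \<le> ennreal (\<integral>\<omega>. \<bar>Y x \<omega>\<bar> \<partial>M)"
      using B_eq[OF x] Y_int[OF x] by (intro ennreal_leI) (simp add: integral_abs_bound)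
    also have "\<dots> = (\<integral>\<^sup>+ \<omega>. ennreal \<bar>Y x \<omega>\<bar> \<partial>M)"
      using Y_int[OF x] by (subst nn_integral_eq_integral) auto
    finally show ?thesis .
  qed
  show ?thesis
  proof (cases "m = \<infinity>")
    case False
    show ?thesis
    proof (cases "p = \<infinity>")
      case True
      have "AE \<omega> in M. AE x in N. ennreal \<bar>Y x \<omega>\<bar> \<le> measure_Lp_norm p N (\<lambda>x. Y x \<omega>)"
        using True by (simp add: measure_Lp_norm_infinite_exponent esssup_AE)
      then have "AE x in N. AE \<omega> in M. ennreal \<bar>Y x \<omega>\<bar> \<le> measure_Lp_norm p N (\<lambda>x. Y x \<omega>)"
        by (subst P.AE_commute) measurable
      then have "AE x in N. ennreal \<bar>B x\<bar> \<le> m"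
        using AE_space
        by eventually_elim (use B_le in \<open>force simp: m_def intro: order_trans nn_integral_mono_AE\<close>)
      then show ?thesis
        using True by (simp add: measure_Lp_norm_infinite_exponent esssup_I m_def)
    next
      case p_finite: False
      define q where "q = enn2real p"
      have q: "1 \<le> q" unfolding q_def using p p_finite by (rule enn2real_ge_1)
      define h where "h \<omega> = enn2real (measure_Lp_norm p N (\<lambda>x. Y x \<omega>))" for \<omega>
      have h_nonneg: "0 \<le> h \<omega>" for \<omega> unfolding h_def by simp
      have [measurable]: "h \<in> borel_measurable M" unfolding h_def by measurable
      have norm_finite: "AE \<omega> in M. measure_Lp_norm p N (\<lambda>x. Y x \<omega>) \<noteq> \<infinity>"
        using False unfolding m_def by (intro nn_integral_PInf_AE) auto
      then have "m = (\<integral>\<^sup>+ \<omega>. ennreal (h \<omega>) \<partial>M)"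
        unfolding m_def h_def
        by (intro nn_integral_cong_AE) (auto elim!: eventually_mono simp: top.not_eq_extremum)
      moreover from this have h_int: "integrable M h"
        using False h_nonneg by (intro integrableI_nonneg) (auto simp: top.not_eq_extremum)
      ultimately have m_eq: "m = ennreal (\<integral>\<omega>. h \<omega> \<partial>M)"
        using h_nonneg by (simp add: nn_integral_eq_integral)
      have h_norm: "AE \<omega> in M. (\<integral>\<^sup>+ x. ennreal (\<bar>Y x \<omega>\<bar> powr q) \<partial>N) = ennreal (h \<omega> powr q)"
        using norm_finite
        by eventually_elim (use p p_finite in \<open>simp add: h_def q_def nn_integral_powr_eq_measure_Lp_norm\<close>)
      have "measure_Lp_norm p N B \<le> ennreal (\<integral>\<omega>. h \<omega> \<partial>M)"
      proof (rule ennreal_le_epsilon)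
        fix \<delta> :: real assume "0 < \<delta>"
        have "(\<integral>\<^sup>+ x. ennreal (\<bar>B x\<bar> powr q) \<partial>N) \<le> ennreal (((\<integral>\<omega>. h \<omega> \<partial>M) + \<delta>) powr q)"
          using h_int h_nonneg h_norm q \<open>0 < \<delta>\<close>
          by (intro nn_integral_powr_mean_le[OF M N Y Y_int B_eq]) auto
        then have "measure_Lp_norm p N B \<le> ennreal ((\<integral>\<omega>. h \<omega> \<partial>M) + \<delta>)"
          using p_finite q \<open>0 < \<delta>\<close> h_nonneg
          by (intro measure_Lp_norm_leI) (auto simp: q_def integral_nonneg_AE)
        then show "measure_Lp_norm p N B \<le> ennreal (\<integral>\<omega>. h \<omega> \<partial>M) + ennreal \<delta>"
          using \<open>0 < \<delta>\<close> h_nonneg by (simp add: ennreal_plus integral_nonneg_AE)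
      qed
      then show ?thesis using m_eq m_def by simp
    qed
  qed (simp add: m_def)
qed

lemma measure_Lp_norm_risk_bounds:
  fixes B :: "'a \<Rightarrow> real" and Z :: "'a \<Rightarrow> 'b \<Rightarrow> real" and \<epsilon> :: real
  assumes M: "prob_space M" and N: "sigma_finite_measure N"
    and B[measurable]: "B \<in> borel_measurable N"
    and Z[measurable]: "(\<lambda>(x, \<omega>). Z x \<omega>) \<in> borel_measurable (N \<Otimes>\<^sub>M M)"
    and Z_int: "\<And>x. x \<in> space N \<Longrightarrow> integrable M (Z x)"
    and Z_mean: "\<And>x. x \<in> space N \<Longrightarrow> (\<integral>\<omega>. Z x \<omega> \<partial>M) = 0"
    and \<epsilon>: "0 < \<epsilon>" and p: "1 \<le> p"
  defines "R \<equiv> \<integral>\<^sup>+ \<omega>. measure_Lp_norm p N (\<lambda>x. B x + \<epsilon> * Z x \<omega>) \<partial>M"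
  shows "measure_Lp_norm p N B + \<epsilon> * (\<integral>\<^sup>+ \<omega>. measure_Lp_norm p N (\<lambda>x. Z x \<omega>) \<partial>M) \<le> 3 * R"
    and "R \<le> measure_Lp_norm p N B + \<epsilon> * (\<integral>\<^sup>+ \<omega>. measure_Lp_norm p N (\<lambda>x. Z x \<omega>) \<partial>M)"
proof -
  interpret prob_space M by fact
  interpret pair_sigma_finite N M
    using N sigma_finite_measure_axioms by (simp add: pair_sigma_finite_def)
  define Y where "Y x \<omega> = B x + \<epsilon> * Z x \<omega>" for x \<omega>
  have Y[measurable]: "(\<lambda>(x, \<omega>). Y x \<omega>) \<in> borel_measurable (N \<Otimes>\<^sub>M M)"
    unfolding Y_def split_beta' by measurable
  have Z_section[measurable]: "(\<lambda>x. Z x \<omega>) \<in> borel_measurable N" if "\<omega> \<in> space M" for \<omega>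
    using measurable_Pair1[OF Z that] by simp
  have [measurable]: "(\<lambda>\<omega>. measure_Lp_norm p N (\<lambda>x. Z x \<omega>)) \<in> borel_measurable M"
    "(\<lambda>\<omega>. measure_Lp_norm p N (\<lambda>x. Y x \<omega>)) \<in> borel_measurable M"
    by (rule borel_measurable_measure_Lp_norm[OF N Z], rule borel_measurable_measure_Lp_norm[OF N Y])
  have scale: "measure_Lp_norm p N (\<lambda>x. \<epsilon> * Z x \<omega>) = \<epsilon> * measure_Lp_norm p N (\<lambda>x. Z x \<omega>)"
    if "\<omega> \<in> space M" for \<omega>
    using that \<epsilon> p by (intro measure_Lp_norm_cmult) auto
  let ?EZ = "\<integral>\<^sup>+ \<omega>. measure_Lp_norm p N (\<lambda>x. Z x \<omega>) \<partial>M"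
  have R_eq: "R = (\<integral>\<^sup>+ \<omega>. measure_Lp_norm p N (\<lambda>x. Y x \<omega>) \<partial>M)"
    by (simp add: R_def Y_def)
  show "R \<le> measure_Lp_norm p N B + \<epsilon> * ?EZ"
  proof -
    have "R \<le> (\<integral>\<^sup>+ \<omega>. measure_Lp_norm p N B + \<epsilon> * measure_Lp_norm p N (\<lambda>x. Z x \<omega>) \<partial>M)"
      unfolding R_def
    proof (rule nn_integral_mono)
      fix \<omega> assume \<omega>: "\<omega> \<in> space M"
      have "measure_Lp_norm p N (\<lambda>x. B x + \<epsilon> * Z x \<omega>)
          \<le> measure_Lp_norm p N B + measure_Lp_norm p N (\<lambda>x. \<epsilon> * Z x \<omega>)"
        using \<omega> by (intro measure_Lp_norm_add_le[OF B _ p]) measurable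
      then show "measure_Lp_norm p N (\<lambda>x. B x + \<epsilon> * Z x \<omega>)
          \<le> measure_Lp_norm p N B + \<epsilon> * measure_Lp_norm p N (\<lambda>x. Z x \<omega>)"
        by (simp add: scale[OF \<omega>])
    qed
    also have "\<dots> = measure_Lp_norm p N B + \<epsilon> * ?EZ"
      by (subst nn_integral_add) (auto simp: nn_integral_cmult emeasure_space_1)
    finally show ?thesis .
  qed
  \<comment> \<open>B is the mean of the error, so Minkowski's integral inequality gives the bias term\<close>
  have bias: "measure_Lp_norm p N B \<le> R"
    unfolding R_eq using Z_int Z_mean p
    by (intro measure_Lp_norm_integral_le[OF M N Y B]) (auto simp: Y_def prob_space)
  have "\<epsilon> * ?EZ = (\<integral>\<^sup>+ \<omega>. \<epsilon> * measure_Lp_norm p N (\<lambda>x. Z x \<omega>) \<partial>M)"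
    by (simp add: nn_integral_cmult)
  also have "\<dots> = (\<integral>\<^sup>+ \<omega>. measure_Lp_norm p N (\<lambda>x. Y x \<omega> + - B x) \<partial>M)"
    by (intro nn_integral_cong) (simp add: scale Y_def)
  also have "\<dots> \<le> (\<integral>\<^sup>+ \<omega>. measure_Lp_norm p N (\<lambda>x. Y x \<omega>) + measure_Lp_norm p N B \<partial>M)"
  proof (rule nn_integral_mono)
    fix \<omega> assume \<omega>: "\<omega> \<in> space M"
    have [measurable]: "(\<lambda>x. Y x \<omega>) \<in> borel_measurable N"
      using measurable_Pair1[OF Y \<omega>] by simp
    show "measure_Lp_norm p N (\<lambda>x. Y x \<omega> + - B x) \<le> measure_Lp_norm p N (\<lambda>x. Y x \<omega>) + measure_Lp_norm p N B"
      using measure_Lp_norm_add_le[of "\<lambda>x. Y x \<omega>" N "\<lambda>x. - B x" p] p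
      by (simp add: measure_Lp_norm_uminus)
  qed
  also have "\<dots> = R + measure_Lp_norm p N B"
    by (subst nn_integral_add) (auto simp: R_eq emeasure_space_1)
  finally have noise: "\<epsilon> * ?EZ \<le> R + measure_Lp_norm p N B" .
  have "\<epsilon> * ?EZ \<le> R + R"
    using bias noise by (meson add_left_mono order_trans)
  with bias have "measure_Lp_norm p N B + \<epsilon> * ?EZ \<le> R + (R + R)"
    by (rule add_mono)
  also have "\<dots> = 3 * R"
  proof -
    have "(3::ennreal) = 1 + 1 + 1" by simp
    then show ?thesis by (simp only: distrib_right mult_1_left add.assoc)
  qed
  finally show "measure_Lp_norm p N B + \<epsilon> * ?EZ \<le> 3 * R" .
qed

lemma wiener_integral_mean_zero:
  assumes M: "prob_space M" and W: "wiener_integral_on M D I" and g: "L2_on D g"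
    and X: "X \<in> borel_measurable M" "AE \<omega> in M. X \<omega> = I g \<omega>"
  shows "integrable M X" "(\<integral>\<omega>. X \<omega> \<partial>M) = 0"
proof -
  interpret prob_space M by fact
  define v where "v = (\<integral>t. (g t)\<^sup>2 \<partial>lebesgue_on D)"
  have Ig: "I g \<in> borel_measurable M"
    and Ig_law: "if v = 0 then AE \<omega> in M. I g \<omega> = 0
      else distributed M lborel (I g) (normal_density 0 (sqrt v))"
    using W g unfolding wiener_integral_on_def v_def by (auto simp: Let_def)
  have "integrable M (I g) \<and> (\<integral>\<omega>. I g \<omega> \<partial>M) = 0"
  proof (cases "v = 0")
    case True
    then have "AE \<omega> in M. I g \<omega> = 0" using Ig_law by simp
    then show ?thesis
      using Ig integrable_cong_AE[of "I g" M "\<lambda>_. 0"] integral_cong_AE[of "I g" M "\<lambda>_. 0"] by auto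
  next
    case False
    moreover have "0 \<le> v" unfolding v_def by simp
    ultimately have "0 < sqrt v" by simp
    moreover have law: "distributed M lborel (I g) (normal_density 0 (sqrt v))"
      using Ig_law False by simp
    ultimately show ?thesis
      using distributed_integrable_var[OF law] integrable_normal_moment_nz_1
        normal_distributed_expectation[OF _ law] by auto
  qed
  then show "integrable M X" "(\<integral>\<omega>. X \<omega> \<partial>M) = 0"
    using integrable_cong_AE[OF X(1) Ig X(2)] integral_cong_AE[OF X(1) Ig X(2)] by auto
qed

lemma sigma_finite_measure_lebesgue_on: "S \<in> lmeasurable \<Longrightarrow> sigma_finite_measure (lebesgue_on S)"
  using finite_measure_lebesgue_on[of S] by (simp add: finite_measure_def)

lemma borel_measurable_kernel_integral:
  fixes S :: "'a \<Rightarrow> 'b \<Rightarrow> real" and F :: "'a \<Rightarrow> real"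
  assumes L: "sigma_finite_measure L"
    and S: "(\<lambda>(t, x). S t x) \<in> borel_measurable (L \<Otimes>\<^sub>M N)"
    and F: "F \<in> borel_measurable L"
  shows "(\<lambda>x. \<integral>t. S t x * F t \<partial>L) \<in> borel_measurable N"
proof -
  have "(\<lambda>(t, x). S t x * F t) \<in> borel_measurable (L \<Otimes>\<^sub>M N)"
    using S F unfolding split_beta' by measurable
  from measurable_pair_swap[OF this] show ?thesis
    using sigma_finite_measure.borel_measurable_lebesgue_integral[OF L, of "\<lambda>x t. S t x * F t" N]
    by simp
qed

lemma ennreal_quarter_le: "x \<le> 3 * R \<Longrightarrow> (1/4) * x \<le> (R :: ennreal)"
proof -
  assume "x \<le> 3 * R"
  have "(1/4) * 3 = (3::ennreal) / 4" by (simp add: ennreal_times_divide mult.commute)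
  also have "\<dots> = ennreal (3 / 4)" by (metis ennreal_divide_numeral ennreal_numeral zero_le_numeral)
  finally have "(1/4) * 3 * R \<le> 1 * R" by (intro mult_right_mono) simp_all
  with \<open>x \<le> 3 * R\<close> show ?thesis
    by (metis mult.assoc mult_1 mult_left_mono order_trans zero_le)
qed

theorem lemma2:
  fixes a b :: "real ^ 'd" and \<epsilon> :: real and p :: ennreal
    and M :: "'w measure" and I :: "(real ^ 'd \<Rightarrow> real) \<Rightarrow> 'w \<Rightarrow> real"
    and S :: "real ^ 'd \<Rightarrow> real ^ 'd \<Rightarrow> real" and F :: "real ^ 'd \<Rightarrow> real"
    and Z :: "real ^ 'd \<Rightarrow> 'w \<Rightarrow> real"
    and B :: "real ^ 'd \<Rightarrow> real" and Ft :: "real ^ 'd \<Rightarrow> 'w \<Rightarrow> real"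
  assumes M: "prob_space M"
    and D: "cube0 \<subseteq> box a b"
    and eps: "0 < \<epsilon>" "\<epsilon> < 1"
    and p: "1 \<le> p"
    and W: "wiener_integral_on M (box a b) I"
    and S_meas: "(\<lambda>(t, x). S t x) \<in> borel_measurable (lebesgue_on (box a b) \<Otimes>\<^sub>M lebesgue_on cube0)"
    and S_L2: "\<forall>x\<in>cube0. L2_on (box a b) (\<lambda>t. S t x)"
    and F_meas: "F \<in> borel_measurable (lebesgue_on (box a b))"
    and F_Lp: "Lp_norm p (box a b) F < \<infinity>"
    and F_L2: "Lp_norm 2 (box a b) F < \<infinity>"
    and Z_meas: "(\<lambda>(x, \<omega>). Z x \<omega>) \<in> borel_measurable (lebesgue_on cube0 \<Otimes>\<^sub>M M)"
    and Z_def: "\<forall>x\<in>cube0. AE \<omega> in M. Z x \<omega> = I (\<lambda>t. S t x) \<omega>"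
    and B_def: "B = (\<lambda>x. (\<integral>t. S t x * F t \<partial>lebesgue_on (box a b)) - F x)"
    and Ft_def: "Ft = (\<lambda>x \<omega>. (\<integral>t. S t x * F t \<partial>lebesgue_on (box a b)) + \<epsilon> * Z x \<omega>)"
  shows "(1/4) * (Lp_norm p cube0 B + ennreal \<epsilon> * (\<integral>\<^sup>+ \<omega>. Lp_norm p cube0 (\<lambda>x. Z x \<omega>) \<partial>M))
           \<le> (\<integral>\<^sup>+ \<omega>. Lp_norm p cube0 (\<lambda>x. Ft x \<omega> - F x) \<partial>M)
       \<and> (\<integral>\<^sup>+ \<omega>. Lp_norm p cube0 (\<lambda>x. Ft x \<omega> - F x) \<partial>M)
           \<le> Lp_norm p cube0 B + ennreal \<epsilon> * (\<integral>\<^sup>+ \<omega>. Lp_norm p cube0 (\<lambda>x. Z x \<omega>) \<partial>M)"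
proof -
  let ?N = "lebesgue_on cube0 :: (real ^ 'd) measure"
  have N: "sigma_finite_measure ?N" and L: "sigma_finite_measure (lebesgue_on (box a b))"
    by (simp_all add: sigma_finite_measure_lebesgue_on cube0_def)
  have "B \<in> borel_measurable ?N"
    using borel_measurable_kernel_integral[OF L S_meas F_meas] measurable_restrict_mono[OF F_meas D]
    unfolding B_def by measurable
  note bounds = measure_Lp_norm_risk_bounds[OF M N this Z_meas _ _ eps(1) p]
  have "integrable M (Z x)" "(\<integral>\<omega>. Z x \<omega> \<partial>M) = 0" if "x \<in> space ?N" for x
  proof -
    have "L2_on (box a b) (\<lambda>t. S t x)" "AE \<omega> in M. Z x \<omega> = I (\<lambda>t. S t x) \<omega>"
      using that S_L2 Z_def by auto
    moreover have "Z x \<in> borel_measurable M"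
      using measurable_Pair2[OF Z_meas that] by simp
    ultimately show "integrable M (Z x)" "(\<integral>\<omega>. Z x \<omega> \<partial>M) = 0"
      using wiener_integral_mean_zero[OF M W] by blast+
  qed
  moreover have "(\<lambda>x. Ft x \<omega> - F x) = (\<lambda>x. B x + \<epsilon> * Z x \<omega>)" for \<omega>
    by (simp add: Ft_def B_def algebra_simps)
  ultimately show ?thesis
    unfolding Lp_norm_eq_measure_Lp_norm using bounds ennreal_quarter_le by simp
qed

end
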